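(* (1) The natural numbers $n$ (identified with the sets $[n]$) as objects, together with the Kleisli arrows $f:[m]\to T([n])$ that satisfy the realizability condition, form a subcategory of the Kleisli category $\mathrm{Kl}(T)$ of the play monad; this subcategory is $\mathbb S^{\mathbb P}_r$ (its composition being the composition of $\mathbb S^{\mathbb P}_r$). (2) $\mathbb S^{\mathbb P}_r$ inherits from $\mathrm{Kl}(T)$ the symmetric monoidal structure whose monoidal product is the coproduct.
   Context: Notation: $[k]=\{1,\dots,k\}$. The play monad $(T,\eta,\mu)$ on $\mathbf{Set}$: $T(X)=X+\mathbb R\times X+\{\exists^*\}+\{\forall^*\}$, with $T(g)$ acting by $x\mapsto g(x)$, $(r,x)\mapsto(r,g(x))$, fixing $\exists^*,\forall^*$; $\eta_X(x)=x$; $\mu_X:T(T(X))\to T(X)$ sends elements of the first summand $T(X)$ to themselves, $\exists^*\mapsto\exists^*$, $\forall^*\mapsto\forall^*$, and on $\mathbb R\times T(X)$: $(r,x)\mapsto(r,x)$ for $x\in X$, $(r,(q,x))\mapsto(r+q,x)$, $(r,\exists^* )\mapsto\exists^*$, $(r,\forall^* )\mapsto\forall^*$. $\mathrm{Kl}(T)$ has sets as objects and functions $X\to T(Y)$ as arrows $X\to Y$, with Kleisli composition. Realizability condition for $f:[m]\to T([n])$: if $f(i)=k\in[n]$ then for every $j\in[m]\setminus\{i\}$, $f(j)\ne k$ and $f(j)\ne(r,k)$ for all $r\in\mathbb R$. $\mathbb S^{\mathbb P}_r$: objects natural numbers; arrows $m\to n$ are functions $f:[m]\to T([n])$ satisfying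 realizability; composition of $f:m\to l$, $g:l\to n$ (diagrammatic): $(f;g)(i)=f(i)$ if $f(i)\in\{\exists^*,\forall^*\}$; $g(j)$ if $f(i)=j\in[l]$; $g(j)$ if $f(i)=(r,j)$ and $g(j)\in\{\exists^*,\forall^*\}$; $(r,k)$ if $f(i)=(r,j)$, $g(j)=k\in[n]$; $(r+r',k)$ if $f(i)=(r,j)$, $g(j)=(r',k)$; identity $i\mapsto i$. Coproducts $[m]+[k]$ are identified with $[m+k]$ in the standard way. *)

theory Defs
  imports Complex_Main "HOL-Library.FuncSet"
begin

datatype 'a play = Ret 'a | Pay real 'a | Ex | Fa

fun mu :: "'a play play \<Rightarrow> 'a play" where
  "mu (Ret t) = t"
| "mu Ex = Ex"
| "mu Fa = Fa"
| "mu (Pay r (Ret x)) = Pay r x"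
| "mu (Pay r (Pay q x)) = Pay (r + q) x"
| "mu (Pay r Ex) = Ex"
| "mu (Pay r Fa) = Fa"

definition eta :: "'a \<Rightarrow> 'a play" where "eta = Ret"

text \<open>Kleisli composition in Kl(T), diagrammatic order (f first, then g).\<close>
definition kcomp :: "('a \<Rightarrow> 'b play) \<Rightarrow> ('b \<Rightarrow> 'c play) \<Rightarrow> 'a \<Rightarrow> 'c play" where
  "kcomp f g = (\<lambda>x. mu (map_play g (f x)))"

text \<open>[k] = {1..k}; elements of T([n]).\<close>
definition ord :: "nat \<Rightarrow> nat set" where "ord k = {1..k}"

definition Tset :: "nat \<Rightarrow> nat play set" where
  "Tset n = {p. set_play p \<subseteq> ord n}"

definition karr :: "nat \<Rightarrow> nat \<Rightarrow> (nat \<Rightarrow> nat play) set" where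
  "karr m n = (ord m \<rightarrow>\<^sub>E Tset n)"

definition realizable :: "nat \<Rightarrow> (nat \<Rightarrow> nat play) \<Rightarrow> bool" where
  "realizable m f \<longleftrightarrow>
     (\<forall>i\<in>ord m. \<forall>k. f i = Ret k \<longrightarrow>
        (\<forall>j\<in>ord m - {i}. f j \<noteq> Ret k \<and> (\<forall>r. f j \<noteq> Pay r k)))"

definition Sarr :: "nat \<Rightarrow> nat \<Rightarrow> (nat \<Rightarrow> nat play) set" where
  "Sarr m n = {f \<in> karr m n. realizable m f}"

definition scomp :: "nat \<Rightarrow> (nat \<Rightarrow> nat play) \<Rightarrow> (nat \<Rightarrow> nat play) \<Rightarrow> nat \<Rightarrow> nat play" where
  "scomp m f g = restrict (\<lambda>i. case f i of
        Ex \<Rightarrow> Ex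
      | Fa \<Rightarrow> Fa
      | Ret j \<Rightarrow> g j
      | Pay r j \<Rightarrow> (case g j of
            Ex \<Rightarrow> Ex
          | Fa \<Rightarrow> Fa
          | Ret k \<Rightarrow> Pay r k
          | Pay r' k \<Rightarrow> Pay (r + r') k)) (ord m)"

definition sid :: "nat \<Rightarrow> nat \<Rightarrow> nat play" where
  "sid m = restrict Ret (ord m)"

text \<open>Monoidal product = coproduct, with [m]+[k] identified with [m+k]
  (first summand 1..m, second summand m+1..m+k). For f : m -> n, g : k -> l,
  tensor m n f g : m+k -> n+l.\<close>
definition tensor :: "nat \<Rightarrow> nat \<Rightarrow> nat \<Rightarrow> (nat \<Rightarrow> nat play) \<Rightarrow> (nat \<Rightarrow> nat play) \<Rightarrow> nat \<Rightarrow> nat play" where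
  "tensor m k n f g = restrict (\<lambda>i. if i \<le> m then f i else map_play (\<lambda>j. j + n) (g (i - m))) (ord (m + k))"

definition inj1 :: "nat \<Rightarrow> nat \<Rightarrow> nat play" where
  "inj1 m = restrict Ret (ord m)"

definition inj2 :: "nat \<Rightarrow> nat \<Rightarrow> nat \<Rightarrow> nat play" where
  "inj2 m k = restrict (\<lambda>i. Ret (i + m)) (ord k)"

definition braid :: "nat \<Rightarrow> nat \<Rightarrow> nat \<Rightarrow> nat play" where
  "braid m k = restrict (\<lambda>i. if i \<le> m then Ret (i + k) else Ret (i - m)) (ord (m + k))"

end

theory Submission
  imports Defs
begin

text \<open>
  The case table defining the composition of \<open>S^P_r\<close> is Kleisli composition of the play monad
  written out, so the category laws are the monad laws restricted to \<open>[m]\<close>. Realizability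
  is preserved: if \<open>(f;g)(i) = k\<close> then \<open>f(i) = a\<close> and \<open>g(a) = k\<close>; any \<open>j\<close> whose
  composite also reaches \<open>k\<close> does so through some \<open>b\<close> reached by \<open>f(j)\<close> with \<open>k\<close> reached
  by \<open>g(b)\<close>, so \<open>b = a\<close> by realizability of \<open>g\<close> and then \<open>j = i\<close> by realizability of
  \<open>f\<close>. Identities, coproduct injections and the symmetry are pure arrows \<open>i \<mapsto> h(i)\<close> with
  \<open>h\<close> injective, hence realizable, and each monoidal law is checked separately on the two
  summands of \<open>[m] + [k] = [m + k]\<close>.
\<close>

lemma mem_set_play_iff: "k \<in> set_play p \<longleftrightarrow> p = Ret k \<or> (\<exists>r. p = Pay r k)"
  by (cases p) auto

lemma mu_Pay:
  "mu (Pay r p) = (case p of Ret x \<Rightarrow> Pay r x | Pay q x \<Rightarrow> Pay (r + q) x | Ex \<Rightarrow> Ex | Fa \<Rightarrow> Fa)"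
  by (cases p) auto

lemma mu_eq_Ret_iff: "mu x = Ret k \<longleftrightarrow> x = Ret (Ret k)"
  by (cases x rule: mu.cases) auto

lemma set_play_mu: "set_play (mu x) \<subseteq> \<Union> (set_play ` set_play x)"
  by (cases x rule: mu.cases) auto

lemma mu_map_play_Ret: "mu (map_play Ret p) = p"
  by (cases p) auto

lemma map_play_mu: "map_play h (mu x) = mu (map_play (map_play h) x)"
  by (cases x rule: mu.cases) auto

lemma mu_mu: "mu (mu x) = mu (map_play mu x)"
  by (cases x) (auto simp: mu_Pay add.assoc split: play.split)

lemma kcomp_assoc: "kcomp (kcomp f g) h = kcomp f (kcomp g h)"
  by (simp add: kcomp_def fun_eq_iff map_play_mu mu_mu play.map_comp o_def)

lemma kcomp_Ret_comp_left: "kcomp (Ret \<circ> h) g = g \<circ> h"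
  by (simp add: kcomp_def fun_eq_iff)

lemma kcomp_Ret_comp_right: "kcomp f (Ret \<circ> h) = map_play h \<circ> f"
  by (simp add: kcomp_def fun_eq_iff mu_map_play_Ret flip: play.map_comp)

lemma kcomp_cong:
  "set_play (f x) \<subseteq> A \<Longrightarrow> (\<And>y. y \<in> A \<Longrightarrow> g y = g' y) \<Longrightarrow> kcomp f g x = kcomp f g' x"
  unfolding kcomp_def by (metis play.map_cong0 subsetD)

lemma set_play_kcomp: "set_play (kcomp f g x) \<subseteq> (\<Union>y\<in>set_play (f x). set_play (g y))"
  using set_play_mu[of "map_play g (f x)"] by (simp add: kcomp_def play.set_map)

lemma kcomp_eq_Ret_iff: "kcomp f g x = Ret k \<longleftrightarrow> (\<exists>y. f x = Ret y \<and> g y = Ret k)"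
  by (cases "f x") (auto simp: kcomp_def mu_eq_Ret_iff)

lemma restrict_kcomp_restrict_left: "restrict (kcomp (restrict f A) g) A = restrict (kcomp f g) A"
  by (intro restrict_ext) (simp add: kcomp_def)

lemma restrict_kcomp_restrict_right:
  assumes "\<And>x. x \<in> A \<Longrightarrow> set_play (f x) \<subseteq> B"
  shows "restrict (kcomp f (restrict g B)) A = restrict (kcomp f g) A"
  by (intro restrict_ext kcomp_cong[where A = B]) (auto simp: assms)

lemma scomp_eq_restrict_kcomp: "scomp m f g = restrict (kcomp f g) (ord m)"
  unfolding scomp_def kcomp_def by (auto split: play.split)

lemma realizable_iff:
  "realizable m f \<longleftrightarrow>
     (\<forall>i\<in>ord m. \<forall>j\<in>ord m. \<forall>k. f i = Ret k \<longrightarrow> k \<in> set_play (f j) \<longrightarrow> j = i)"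
  unfolding realizable_def mem_set_play_iff by blast

lemma Sarr_iff:
  "f \<in> Sarr m n \<longleftrightarrow> f \<in> extensional (ord m) \<and> (\<forall>i\<in>ord m. set_play (f i) \<subseteq> ord n) \<and>
     (\<forall>i\<in>ord m. \<forall>j\<in>ord m. \<forall>k. f i = Ret k \<longrightarrow> k \<in> set_play (f j) \<longrightarrow> j = i)"
  by (auto simp: Sarr_def karr_def Tset_def PiE_iff realizable_iff)

lemma Sarr_set_play: "f \<in> Sarr m n \<Longrightarrow> i \<in> ord m \<Longrightarrow> set_play (f i) \<subseteq> ord n"
  by (simp add: Sarr_iff)

lemma Sarr_Ret_unique:
  "f \<in> Sarr m n \<Longrightarrow> i \<in> ord m \<Longrightarrow> j \<in> ord m \<Longrightarrow> f i = Ret k \<Longrightarrow> k \<in> set_play (f j) \<Longrightarrow> j = i"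
  by (simp add: Sarr_iff)

lemma Sarr_restrict: "f \<in> Sarr m n \<Longrightarrow> restrict f (ord m) = f"
  by (simp add: Sarr_iff extensional_restrict)

lemma scomp_in_Sarr:
  assumes f: "f \<in> Sarr m l" and g: "g \<in> Sarr l n"
  shows "scomp m f g \<in> Sarr m n"
  unfolding Sarr_iff scomp_eq_restrict_kcomp
proof (intro conjI ballI allI impI)
  fix i assume "i \<in> ord m"
  then show "set_play (restrict (kcomp f g) (ord m) i) \<subseteq> ord n"
    using set_play_kcomp[of f g i] f g by (fastforce simp: Sarr_iff)
next
  fix i j k
  assume i: "i \<in> ord m" and j: "j \<in> ord m"
    and ret: "restrict (kcomp f g) (ord m) i = Ret k"
    and hit: "k \<in> set_play (restrict (kcomp f g) (ord m) j)"
  obtain a where fa: "f i = Ret a" and ga: "g a = Ret k"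
    using ret i by (auto simp: kcomp_eq_Ret_iff)
  obtain b where fb: "b \<in> set_play (f j)" and gb: "k \<in> set_play (g b)"
    using hit j set_play_kcomp[of f g j] by auto
  have "a \<in> ord l"
    using Sarr_set_play[OF f i] fa by simp
  moreover have "b \<in> ord l"
    using Sarr_set_play[OF f j] fb by blast
  ultimately have "b = a"
    using Sarr_Ret_unique[OF g] ga gb by blast
  then show "j = i"
    using Sarr_Ret_unique[OF f i j fa] fb by simp
qed simp

lemma scomp_assoc:
  assumes "f \<in> Sarr m l"
  shows "scomp m (scomp m f g) h = scomp m f (scomp l g h)"
proof -
  have "\<And>i. i \<in> ord m \<Longrightarrow> set_play (f i) \<subseteq> ord l"
    using assms by (simp add: Sarr_iff)
  then show ?thesis
    by (simp add: scomp_eq_restrict_kcomp restrict_kcomp_restrict_left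
        restrict_kcomp_restrict_right kcomp_assoc)
qed

definition pure_arr :: "nat \<Rightarrow> (nat \<Rightarrow> nat) \<Rightarrow> nat \<Rightarrow> nat play" where
  "pure_arr m h = restrict (Ret \<circ> h) (ord m)"

lemma sid_eq_pure_arr: "sid m = pure_arr m id"
  by (simp add: sid_def pure_arr_def)

lemma inj1_eq_sid: "inj1 m = sid m"
  by (simp add: inj1_def sid_def)

lemma inj2_eq_pure_arr: "inj2 m k = pure_arr k (\<lambda>i. i + m)"
  by (simp add: inj2_def pure_arr_def o_def)

lemma braid_eq_pure_arr: "braid m k = pure_arr (m + k) (\<lambda>i. if i \<le> m then i + k else i - m)"
  by (auto simp: braid_def pure_arr_def)

lemma pure_arr_in_Sarr: "inj_on h (ord m) \<Longrightarrow> h ` ord m \<subseteq> ord n \<Longrightarrow> pure_arr m h \<in> Sarr m n"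
  by (auto simp: Sarr_iff pure_arr_def inj_on_def)

lemma scomp_pure_arr_left: "scomp m (pure_arr m h) g = restrict (g \<circ> h) (ord m)"
  by (simp add: scomp_eq_restrict_kcomp pure_arr_def restrict_kcomp_restrict_left kcomp_Ret_comp_left)

lemma scomp_pure_arr_right: "f \<in> Sarr m l \<Longrightarrow> scomp m f (pure_arr l h) = restrict (map_play h \<circ> f) (ord m)"
  by (simp add: scomp_eq_restrict_kcomp pure_arr_def Sarr_iff restrict_kcomp_restrict_right kcomp_Ret_comp_right)

lemma sid_in_Sarr: "sid m \<in> Sarr m m"
  by (simp add: sid_eq_pure_arr pure_arr_in_Sarr)

lemma inj1_in_Sarr: "inj1 m \<in> Sarr m (m + k)"
  by (simp add: inj1_eq_sid sid_eq_pure_arr pure_arr_in_Sarr ord_def)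

lemma inj2_in_Sarr: "inj2 m k \<in> Sarr k (m + k)"
  by (simp add: inj2_eq_pure_arr pure_arr_in_Sarr ord_def)

lemma scomp_sid_left_eq_restrict: "scomp m (sid m) g = restrict g (ord m)"
  by (simp add: sid_eq_pure_arr scomp_pure_arr_left)

lemma scomp_sid_right: "f \<in> Sarr m n \<Longrightarrow> scomp m f (sid n) = f"
  by (simp add: sid_eq_pure_arr scomp_pure_arr_right play.map_id0 Sarr_restrict)

lemma scomp_sid_left: "f \<in> Sarr m n \<Longrightarrow> scomp m (sid m) f = f"
  by (simp add: scomp_sid_left_eq_restrict Sarr_restrict)

lemma ord_add_cases:
  assumes "i \<in> ord (m + k)"
  obtains "i \<in> ord m" | j where "j \<in> ord k" "i = j + m"
proof (cases "i \<le> m")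
  case False
  then show thesis
    using assms that(2)[of "i - m"] by (simp add: ord_def)
qed (use assms that(1) in \<open>simp add: ord_def\<close>)

lemma extensional_ord_add_eqI:
  assumes "F \<in> extensional (ord (m + k))" "G \<in> extensional (ord (m + k))"
    and "\<And>i. i \<in> ord m \<Longrightarrow> F i = G i" "\<And>j. j \<in> ord k \<Longrightarrow> F (j + m) = G (j + m)"
  shows "F = G"
  using assms by (intro extensionalityI) (auto elim: ord_add_cases)

lemma tensor_apply_left: "i \<in> ord m \<Longrightarrow> tensor m k n f g i = f i"
  by (simp add: tensor_def ord_def)

lemma tensor_apply_right: "j \<in> ord k \<Longrightarrow> tensor m k n f g (j + m) = map_play (\<lambda>x. x + n) (g j)"
  by (simp add: tensor_def ord_def)

lemma set_play_tensor_left: "i \<in> ord m \<Longrightarrow> set_play (tensor m k n f g i) = set_play (f i)"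
  by (simp add: tensor_apply_left)

lemma set_play_tensor_right:
  "j \<in> ord k \<Longrightarrow> set_play (tensor m k n f g (j + m)) = (\<lambda>x. x + n) ` set_play (g j)"
  by (simp add: tensor_apply_right play.set_map)

lemma tensor_in_Sarr:
  assumes f: "f \<in> Sarr m n" and g: "g \<in> Sarr k l"
  shows "tensor m k n f g \<in> Sarr (m + k) (n + l)"
  unfolding Sarr_iff
proof (intro conjI ballI allI impI)
  show "tensor m k n f g \<in> extensional (ord (m + k))"
    by (simp add: tensor_def)
next
  fix i assume "i \<in> ord (m + k)"
  then show "set_play (tensor m k n f g i) \<subseteq> ord (n + l)"
  proof (cases rule: ord_add_cases)
    case 1
    then have "set_play (f i) \<subseteq> ord n"
      using f by (simp add: Sarr_iff)
    also have "ord n \<subseteq> ord (n + l)"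
      by (simp add: ord_def)
    finally show ?thesis
      using 1 by (simp add: set_play_tensor_left)
  next
    case (2 j)
    then have "set_play (g j) \<subseteq> ord l"
      using g by (simp add: Sarr_iff)
    then show ?thesis
      using 2 by (auto simp: set_play_tensor_right ord_def)
  qed
next
  \<comment> \<open>Within one summand use realizability of \<open>f\<close> or \<open>g\<close>; across summands the targets
    lie in the disjoint ranges \<open>[n]\<close> and \<open>n + [l]\<close>.\<close>
  fix i j q
  assume i: "i \<in> ord (m + k)" and j: "j \<in> ord (m + k)"
    and ret: "tensor m k n f g i = Ret q" and hit: "q \<in> set_play (tensor m k n f g j)"
  show "j = i"
  proof (cases rule: ord_add_cases[OF i])
    case 1
    then have fi: "f i = Ret q"
      using ret by (simp add: tensor_apply_left)
    then have "q \<le> n"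
      using Sarr_set_play[OF f 1] by (simp add: ord_def)
    show ?thesis
    proof (cases rule: ord_add_cases[OF j])
      case 1
      then show ?thesis
        using hit Sarr_Ret_unique[OF f \<open>i \<in> ord m\<close> _ fi] by (simp add: set_play_tensor_left)
    next
      case (2 b)
      then show ?thesis
        using hit \<open>q \<le> n\<close> Sarr_set_play[OF g \<open>b \<in> ord k\<close>]
        by (auto simp: set_play_tensor_right ord_def)
    qed
  next
    case (2 a)
    then obtain q' where ga: "g a = Ret q'" and q: "q = q' + n"
      using ret by (cases "g a") (auto simp: tensor_apply_right)
    then have "q' \<in> ord l"
      using Sarr_set_play[OF g \<open>a \<in> ord k\<close>] by simp
    show ?thesis
    proof (cases rule: ord_add_cases[OF j])
      case 1
      then show ?thesis
        using hit q \<open>q' \<in> ord l\<close> Sarr_set_play[OF f 1] by (auto simp: set_play_tensor_left ord_def)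
    next
      case (2 b)
      then show ?thesis
        using hit q Sarr_Ret_unique[OF g \<open>a \<in> ord k\<close> _ ga] \<open>i = a + m\<close>
        by (auto simp: set_play_tensor_right)
    qed
  qed
qed

lemma scomp_inj1_tensor:
  "f \<in> Sarr m n \<Longrightarrow> scomp m (inj1 m) (tensor m k n f g) = scomp m f (inj1 n)"
  by (auto simp: inj1_eq_sid scomp_sid_left_eq_restrict scomp_sid_right tensor_apply_left Sarr_iff
      intro!: extensionalityI[of _ "ord m"])

lemma scomp_inj2_tensor:
  "g \<in> Sarr k l \<Longrightarrow> scomp k (inj2 m k) (tensor m k n f g) = scomp k g (inj2 n l)"
  by (auto simp: inj2_eq_pure_arr scomp_pure_arr_left scomp_pure_arr_right tensor_apply_right
      intro!: restrict_ext)

lemma tensor_scomp: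
  assumes f: "f \<in> Sarr m p" and f': "f' \<in> Sarr k q"
  shows "tensor m k n (scomp m f g) (scomp k f' g')
    = scomp (m + k) (tensor m k p f f') (tensor p q n g g')"
proof (rule extensional_ord_add_eqI)
  fix i assume i: "i \<in> ord m"
  have "kcomp f g i = kcomp f (tensor p q n g g') i"
    using Sarr_set_play[OF f i] by (intro kcomp_cong) (auto simp: tensor_apply_left)
  then show "tensor m k n (scomp m f g) (scomp k f' g') i
      = scomp (m + k) (tensor m k p f f') (tensor p q n g g') i"
    using i by (simp add: tensor_apply_left scomp_eq_restrict_kcomp kcomp_def ord_def)
next
  fix j assume j: "j \<in> ord k"
  have "kcomp f' (map_play (\<lambda>x. x + n) \<circ> g') j = kcomp f' (\<lambda>y. tensor p q n g g' (y + p)) j"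
    using Sarr_set_play[OF f' j] by (intro kcomp_cong) (auto simp: tensor_apply_right)
  then show "tensor m k n (scomp m f g) (scomp k f' g') (j + m)
      = scomp (m + k) (tensor m k p f f') (tensor p q n g g') (j + m)"
    using j by (simp add: tensor_apply_right scomp_eq_restrict_kcomp map_play_mu kcomp_def
        play.map_comp o_def ord_def)
qed (simp_all add: tensor_def scomp_eq_restrict_kcomp)

lemma tensor_sid: "tensor m k m (sid m) (sid k) = sid (m + k)"
  by (rule ext) (auto simp: tensor_def sid_def ord_def)

lemma tensor_assoc:
  "tensor (m + k) p (n + l) (tensor m k n f g) h = tensor m (k + p) n f (tensor k p l g h)"
  by (rule ext) (auto simp: tensor_def ord_def play.map_comp o_def ac_simps)

lemma tensor_sid0_right: "f \<in> Sarr m n \<Longrightarrow> tensor m 0 n f (sid 0) = f"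
  by (rule ext) (auto simp: tensor_def ord_def Sarr_iff extensional_def)

lemma tensor_sid0_left: "f \<in> Sarr m n \<Longrightarrow> tensor 0 m 0 (sid 0) f = f"
  by (rule ext) (auto simp: tensor_def ord_def Sarr_iff extensional_def play.map_ident)

lemma braid_in_Sarr: "braid m k \<in> Sarr (m + k) (k + m)"
  unfolding braid_eq_pure_arr by (rule pure_arr_in_Sarr) (auto simp: inj_on_def ord_def)

lemma braid_natural:
  assumes f: "f \<in> Sarr m n" and g: "g \<in> Sarr k l"
  shows "scomp (m + k) (tensor m k n f g) (braid n l) = scomp (m + k) (braid m k) (tensor k m l g f)"
proof (rule extensional_ord_add_eqI)
  fix i assume i: "i \<in> ord m"
  have "map_play (\<lambda>i. if i \<le> n then i + l else i - n) (f i) = map_play (\<lambda>x. x + l) (f i)"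
    using Sarr_set_play[OF f i] by (intro play.map_cong) (auto simp: ord_def)
  then show "scomp (m + k) (tensor m k n f g) (braid n l) i
      = scomp (m + k) (braid m k) (tensor k m l g f) i"
    using i tensor_apply_right[OF i, of k l g f] tensor_in_Sarr[OF f g]
    by (simp add: braid_eq_pure_arr scomp_pure_arr_left scomp_pure_arr_right tensor_apply_left ord_def)
next
  fix j assume j: "j \<in> ord k"
  have "map_play (\<lambda>i. if i \<le> n then i + l else i - n) (map_play (\<lambda>x. x + n) (g j)) = g j"
    using Sarr_set_play[OF g j] by (auto simp: play.map_comp ord_def intro!: play.map_ident_strong)
  then show "scomp (m + k) (tensor m k n f g) (braid n l) (j + m)
      = scomp (m + k) (braid m k) (tensor k m l g f) (j + m)"
    using j tensor_in_Sarr[OF f g]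
    by (simp add: braid_eq_pure_arr scomp_pure_arr_left scomp_pure_arr_right tensor_apply_left
        tensor_apply_right ord_def)
qed (simp_all add: scomp_eq_restrict_kcomp)

lemma braid_inverse: "scomp (m + k) (braid m k) (braid k m) = sid (m + k)"
  by (simp add: braid_eq_pure_arr scomp_pure_arr_left sid_eq_pure_arr)
    (auto simp: pure_arr_def ord_def intro!: restrict_ext)

lemma braid_hexagon:
  "braid m (k + l) = scomp (m + k + l) (tensor (m + k) l (k + m) (braid m k) (sid l))
                                       (tensor k (m + l) k (sid k) (braid m l))"
  by (rule ext) (auto simp: scomp_eq_restrict_kcomp kcomp_def braid_def sid_def tensor_def ord_def)

theorem propositionB2:
  shows
   \<comment> \<open>(1) subcategory of Kl(T): identities are the Kleisli identities, arrows closed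
       under composition, composition of S^P_r is Kleisli composition; category laws\<close>
   "(\<forall>m. sid m \<in> Sarr m m \<and> sid m = restrict eta (ord m))
    \<and> (\<forall>m l n f g. f \<in> Sarr m l \<longrightarrow> g \<in> Sarr l n \<longrightarrow>
          scomp m f g \<in> Sarr m n \<and> scomp m f g = restrict (kcomp f g) (ord m))
    \<and> (\<forall>m n f. f \<in> Sarr m n \<longrightarrow> scomp m (sid m) f = f \<and> scomp m f (sid n) = f)
    \<and> (\<forall>m l p n f g h. f \<in> Sarr m l \<longrightarrow> g \<in> Sarr l p \<longrightarrow> h \<in> Sarr p n \<longrightarrow>
          scomp m (scomp m f g) h = scomp m f (scomp l g h))
   \<comment> \<open>(2) symmetric monoidal structure inherited from Kl(T), product = coproduct\<close>
    \<and> (\<forall>m k. inj1 m \<in> Sarr m (m + k) \<and> inj2 m k \<in> Sarr k (m + k))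
    \<and> (\<forall>m n k l f g. f \<in> Sarr m n \<longrightarrow> g \<in> Sarr k l \<longrightarrow>
          tensor m k n f g \<in> Sarr (m + k) (n + l)
        \<and> scomp m (inj1 m) (tensor m k n f g) = scomp m f (inj1 n)
        \<and> scomp k (inj2 m k) (tensor m k n f g) = scomp k g (inj2 n l))
    \<and> (\<forall>m k. tensor m k m (sid m) (sid k) = sid (m + k))
    \<and> (\<forall>m p n k q l f g f' g'. f \<in> Sarr m p \<longrightarrow> g \<in> Sarr p n \<longrightarrow>
          f' \<in> Sarr k q \<longrightarrow> g' \<in> Sarr q l \<longrightarrow>
          tensor m k n (scomp m f g) (scomp k f' g')
            = scomp (m + k) (tensor m k p f f') (tensor p q n g g'))
    \<and> (\<forall>m n k l p q f g h. f \<in> Sarr m n \<longrightarrow> g \<in> Sarr k l \<longrightarrow> h \<in> Sarr p q \<longrightarrow>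
          tensor (m + k) p (n + l) (tensor m k n f g) h
            = tensor m (k + p) n f (tensor k p l g h))
    \<and> (\<forall>m n f. f \<in> Sarr m n \<longrightarrow> tensor m 0 n f (sid 0) = f \<and> tensor 0 m 0 (sid 0) f = f)
    \<and> (\<forall>m k. braid m k \<in> Sarr (m + k) (k + m))
    \<and> (\<forall>m n k l f g. f \<in> Sarr m n \<longrightarrow> g \<in> Sarr k l \<longrightarrow>
          scomp (m + k) (tensor m k n f g) (braid n l)
            = scomp (m + k) (braid m k) (tensor k m l g f))
    \<and> (\<forall>m k. scomp (m + k) (braid m k) (braid k m) = sid (m + k))
    \<and> (\<forall>m k l. braid m (k + l)
          = scomp (m + k + l) (tensor (m + k) l (k + m) (braid m k) (sid l))
                               (tensor k (m + l) k (sid k) (braid m l)))"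
proof -
  have "sid m = restrict eta (ord m)" for m
    by (simp add: sid_def eta_def)
  then show ?thesis
    by (blast intro: sid_in_Sarr scomp_in_Sarr scomp_eq_restrict_kcomp scomp_sid_left
        scomp_sid_right scomp_assoc inj1_in_Sarr inj2_in_Sarr tensor_in_Sarr scomp_inj1_tensor
        scomp_inj2_tensor tensor_sid tensor_scomp tensor_assoc tensor_sid0_right tensor_sid0_left
        braid_in_Sarr braid_natural braid_inverse braid_hexagon)
qed

end
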